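(* Let $\mathcal B$ be a BMC with $\mathbf c^*_q<\infty$ for all $q\in\mathcal T$, and consider the Q-learning process with learning rates $\lambda_i\in[0,1]$, a fixed selection distribution $(p_q)_{q\in\mathcal T}$, and initial value $Q_0=\kappa\mathbf c^*$ for a scalar $\kappa\ge 1$. Then for all $i\in\mathbb N$, $\mathbf c^*\le T(\mathbb E Q_i)\le \mathbb E Q_{i+1}\le\mathbb E Q_i$.
   Context: A branching Markov chain (BMC) is $\mathcal B=(\mathcal T,p,c)$ with $\mathcal T$ a finite set of types, $p(q)$ for each $q\in\mathcal T$ a probability distribution with finite support over finite lists $\mathcal T^*$ of types (the offspring distribution), and $c:\mathcal T\to\mathbb R_{>0}$ a strictly positive cost. (It is a BMDP with one action per type.) For a list $\alpha$, $|\alpha|$ is its length and $\alpha_i$ its $i$-th element. Its process: a list of entities; repeatedly some entity of type $q$ is replaced by a list $\beta$ drawn from $p(q)$, incurring cost $c(q)$, until the list is empty. $\mathbf c^*_q\in[0,\infty]$ denotes the expected total cost until extinction starting from the single entity $q$; equivalently $\mathbf c^*$ is the least fixed point in $[0,\infty]^{\mathcal T}$ of $F(\mathbf x)_q=c(q)+\sum_\alpha p(q)(\alpha)\sum_{i=1}^{|\alpha|}\mathbf x_{\alpha_i}$. Q-values for a BMC are vectors $Q\in\mathbb R_{\ge0}^{\mathcal T}$. The target operator is $T(Q)(q)=c(q)+\sum_{\alpha\in\mathcal T^*}p(q)(\alpha)\sum_{j=1}^{|\alpha|}Q(\alpha_j)$ (an affine map $T(Q)=BQ+\mathbf c$ with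 $B$ a nonnegative matrix). Q-learning process: given deterministic learning rates $\lambda_i\in[0,1]$, a probability distribution $(p_q)_{q\in\mathcal T}$ and an initial vector $Q_0\ge\mathbf 0$, at each step $i=0,1,2,\dots$ a type $q_i$ is selected with probability $p_{q_i}$ independently of all previous randomness, then a list $\beta^i$ is drawn from $p(q_i)$ independently, and $Q_{i+1}(q_i)=(1-\lambda_i)Q_i(q_i)+\lambda_i\big(c(q_i)+\sum_{j=1}^{|\beta^i|}Q_i(\beta^i_j)\big)$, while $Q_{i+1}(q)=Q_i(q)$ for $q\ne q_i$. $\mathbb E Q_i$ is the componentwise expectation; inequalities between vectors are componentwise. *)

theory Defs
  imports "HOL-Probability.Probability"
begin

text \<open>A branching Markov chain over a finite type 'q of types: offspring distribution
  p :: 'q => 'q list pmf (finite support), cost c :: 'q => real (strictly positive).\<close>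

definition bmc :: "('q::finite \<Rightarrow> 'q list pmf) \<Rightarrow> ('q \<Rightarrow> real) \<Rightarrow> bool" where
  "bmc p c \<longleftrightarrow> (\<forall>q. finite (set_pmf (p q))) \<and> (\<forall>q. c q > 0)"

definition Fop :: "('q \<Rightarrow> 'q list pmf) \<Rightarrow> ('q \<Rightarrow> real) \<Rightarrow> ('q \<Rightarrow> ennreal) \<Rightarrow> ('q \<Rightarrow> ennreal)" where
  "Fop p c x = (\<lambda>q. ennreal (c q) +
      (\<Sum>\<alpha>\<in>set_pmf (p q). ennreal (pmf (p q) \<alpha>) * (\<Sum>i<length \<alpha>. x (\<alpha> ! i))))"

definition cstar :: "('q \<Rightarrow> 'q list pmf) \<Rightarrow> ('q \<Rightarrow> real) \<Rightarrow> ('q \<Rightarrow> ennreal)" where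
  "cstar p c = lfp (Fop p c)"

definition Top :: "('q \<Rightarrow> 'q list pmf) \<Rightarrow> ('q \<Rightarrow> real) \<Rightarrow> ('q \<Rightarrow> real) \<Rightarrow> ('q \<Rightarrow> real)" where
  "Top p c Q = (\<lambda>q. c q +
      (\<Sum>\<alpha>\<in>set_pmf (p q). pmf (p q) \<alpha> * (\<Sum>j<length \<alpha>. Q (\<alpha> ! j))))"

definition qupdate :: "('q \<Rightarrow> real) \<Rightarrow> real \<Rightarrow> ('q \<Rightarrow> real) \<Rightarrow> 'q \<Rightarrow> 'q list \<Rightarrow> ('q \<Rightarrow> real)" where
  "qupdate c lam Q q \<beta> = Q(q := (1 - lam) * Q q + lam * (c q + (\<Sum>j<length \<beta>. Q (\<beta> ! j))))"

primrec qdist :: "('q \<Rightarrow> 'q list pmf) \<Rightarrow> ('q \<Rightarrow> real) \<Rightarrow> (nat \<Rightarrow> real) \<Rightarrow> 'q pmf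
    \<Rightarrow> ('q \<Rightarrow> real) \<Rightarrow> nat \<Rightarrow> ('q \<Rightarrow> real) pmf" where
  "qdist p c lam sel Q0 0 = return_pmf Q0"
| "qdist p c lam sel Q0 (Suc i) =
     bind_pmf (qdist p c lam sel Q0 i) (\<lambda>Q.
       bind_pmf sel (\<lambda>q.
         bind_pmf (p q) (\<lambda>\<beta>. return_pmf (qupdate c (lam i) Q q \<beta>))))"

definition EQ :: "('q \<Rightarrow> 'q list pmf) \<Rightarrow> ('q \<Rightarrow> real) \<Rightarrow> (nat \<Rightarrow> real) \<Rightarrow> 'q pmf
    \<Rightarrow> ('q \<Rightarrow> real) \<Rightarrow> nat \<Rightarrow> ('q \<Rightarrow> real)" where
  "EQ p c lam sel Q0 i = (\<lambda>q. measure_pmf.expectation (qdist p c lam sel Q0 i) (\<lambda>Q. Q q))"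

end

theory Submission
  imports Defs
begin

text \<open>Since \<open>T\<close> is affine, taking expectations in the update rule gives
  \<open>E Q\<^sub>i\<^sub>+\<^sub>1 = E Q\<^sub>i + p\<^sub>q \<lambda>\<^sub>i (T(E Q\<^sub>i) - E Q\<^sub>i)\<close> componentwise, with \<open>0 \<le> p\<^sub>q \<lambda>\<^sub>i \<le> 1\<close>.
  So whenever \<open>T(E Q\<^sub>i) \<le> E Q\<^sub>i\<close>, the next expectation lies between \<open>T(E Q\<^sub>i)\<close> and
  \<open>E Q\<^sub>i\<close>, and monotonicity of \<open>T\<close> gives \<open>T(E Q\<^sub>i\<^sub>+\<^sub>1) \<le> T(E Q\<^sub>i) \<le> E Q\<^sub>i\<^sub>+\<^sub>1\<close>: the
  expectations descend. The start \<open>\<kappa> c\<^sup>*\<close> qualifies because \<open>c\<^sup>*\<close> is a fixed point of \<open>T\<close>,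
  so \<open>T(\<kappa> c\<^sup>*) = \<kappa> c\<^sup>* - (\<kappa> - 1) c \<le> \<kappa> c\<^sup>*\<close>; and \<open>c\<^sup>* = T c\<^sup>* \<le> T(E Q\<^sub>i)\<close> follows by
  induction from \<open>c\<^sup>* \<le> \<kappa> c\<^sup>*\<close>.\<close>

lemma Top_mono: "Q \<le> Q' \<Longrightarrow> Top p c Q \<le> Top p c Q'"
  unfolding Top_def le_fun_def by (auto intro!: add_left_mono sum_mono mult_left_mono)

lemma Top_nonneg:
  assumes "\<And>q. 0 \<le> c q" and "\<And>q. 0 \<le> x q"
  shows "0 \<le> Top p c x q"
  unfolding Top_def using assms by (intro add_nonneg_nonneg sum_nonneg mult_nonneg_nonneg) auto

lemma Top_scale: "Top p c (\<lambda>q. k * x q) q = c q + k * (Top p c x q - c q)"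
  by (simp add: Top_def sum_distrib_left algebra_simps)

lemma mono_Fop: "mono (Fop p c)"
  unfolding Fop_def mono_def le_fun_def by (auto intro!: add_left_mono sum_mono mult_left_mono)

lemma Fop_ennreal:
  assumes "\<And>q. 0 \<le> c q" and "\<And>q. 0 \<le> x q"
  shows "Fop p c (\<lambda>q. ennreal (x q)) = (\<lambda>q. ennreal (Top p c x q))"
proof
  fix q
  have "ennreal (pmf (p q) \<alpha>) * (\<Sum>i<length \<alpha>. ennreal (x (\<alpha> ! i)))
      = ennreal (pmf (p q) \<alpha> * (\<Sum>i<length \<alpha>. x (\<alpha> ! i)))" for \<alpha>
    using assms(2) by (simp add: sum_ennreal ennreal_mult sum_nonneg)
  moreover have "0 \<le> pmf (p q) \<alpha> * (\<Sum>i<length \<alpha>. x (\<alpha> ! i))" for \<alpha>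
    using assms(2) by (simp add: sum_nonneg)
  ultimately show "Fop p c (\<lambda>q. ennreal (x q)) q = ennreal (Top p c x q)"
    using assms(1)[of q] by (simp add: Fop_def Top_def sum_ennreal ennreal_plus sum_nonneg)
qed

lemma Top_cstar:
  assumes "\<And>q. 0 \<le> c q" and "\<And>q. cstar p c q < \<infinity>"
  shows "Top p c (\<lambda>q. enn2real (cstar p c q)) = (\<lambda>q. enn2real (cstar p c q))"
proof -
  define x where "x q = enn2real (cstar p c q)" for q
  have cstar_real: "cstar p c = (\<lambda>q. ennreal (x q))"
    using assms(2) by (simp add: x_def fun_eq_iff less_top)
  have "cstar p c = Fop p c (cstar p c)"
    unfolding cstar_def by (rule lfp_unfold[OF mono_Fop])
  also have "\<dots> = (\<lambda>q. ennreal (Top p c x q))"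
    unfolding cstar_real using assms(1) by (rule Fop_ennreal) (simp add: x_def)
  finally have "(\<lambda>q. ennreal (x q)) = (\<lambda>q. ennreal (Top p c x q))"
    unfolding cstar_real .
  then have "Top p c x = x"
    using Top_nonneg[OF assms(1), of x] by (simp add: x_def fun_eq_iff)
  then show ?thesis
    unfolding x_def .
qed

lemma expectation_bind_pmf_finite:
  fixes h :: "'b \<Rightarrow> real"
  assumes "finite (set_pmf M)" and "\<And>x. x \<in> set_pmf M \<Longrightarrow> finite (set_pmf (f x))"
  shows "measure_pmf.expectation (M \<bind> f) h
       = measure_pmf.expectation M (\<lambda>x. measure_pmf.expectation (f x) h)"
  using assms by (simp add: pmf_expectation_bind[of "set_pmf M"] integral_measure_pmf_real mult.commute)

lemma expectation_if_eq:
  fixes d :: real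
  shows "measure_pmf.expectation M (\<lambda>x. if x = y then d else 0) = pmf M y * d"
  by (subst integral_measure_pmf_real[of "{y}"]) (auto split: if_splits)

lemma Top_eq_expectation:
  assumes "finite (set_pmf (p q))"
  shows "Top p c Q q = c q + measure_pmf.expectation (p q) (\<lambda>\<alpha>. \<Sum>j<length \<alpha>. Q (\<alpha> ! j))"
  using assms by (simp add: Top_def integral_measure_pmf_real[of "set_pmf (p q)"] mult.commute)

lemma Top_expectation:
  assumes "finite (set_pmf M)"
  shows "Top p c (\<lambda>q'. measure_pmf.expectation M (\<lambda>Q. Q q'))
       = (\<lambda>q. measure_pmf.expectation M (\<lambda>Q. Top p c Q q))"
  using assms unfolding Top_def by (simp add: integrable_measure_pmf_finite)

lemma expectation_qupdate:
  assumes "finite (set_pmf (p q))"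
  shows "measure_pmf.expectation (p q) (\<lambda>\<beta>. qupdate c l Q q \<beta> q')
       = Q q' + (if q = q' then l * (Top p c Q q' - Q q') else 0)"
proof (cases "q = q'")
  case True
  have "measure_pmf.expectation (p q) (\<lambda>\<beta>. qupdate c l Q q \<beta> q')
      = measure_pmf.expectation (p q)
          (\<lambda>\<beta>. ((1 - l) * Q q + l * c q) + l * (\<Sum>j<length \<beta>. Q (\<beta> ! j)))"
    using True by (simp add: qupdate_def distrib_left add.assoc)
  also have "\<dots> = (1 - l) * Q q + l * (c q + measure_pmf.expectation (p q) (\<lambda>\<beta>. \<Sum>j<length \<beta>. Q (\<beta> ! j)))"
    using assms by (simp add: integrable_measure_pmf_finite distrib_left)
  finally show ?thesis
    using True assms by (simp add: Top_eq_expectation algebra_simps)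
qed (simp add: qupdate_def)

lemma expectation_qlearning_step:
  fixes p :: "'q::finite \<Rightarrow> 'q list pmf"
  assumes "\<And>q. finite (set_pmf (p q))"
  shows "measure_pmf.expectation (sel \<bind> (\<lambda>q. p q \<bind> (\<lambda>\<beta>. return_pmf (qupdate c l Q q \<beta>)))) (\<lambda>Q'. Q' q')
       = Q q' + pmf sel q' * l * (Top p c Q q' - Q q')"
  using assms
  by (simp add: expectation_bind_pmf_finite expectation_qupdate expectation_if_eq integrable_measure_pmf_finite)

lemma finite_set_pmf_qdist:
  fixes p :: "'q::finite \<Rightarrow> 'q list pmf"
  assumes "\<And>q. finite (set_pmf (p q))"
  shows "finite (set_pmf (qdist p c lam sel Q0 i))"
  using assms by (induction i) (auto simp: set_bind_pmf intro!: finite_UN_I)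

lemma EQ_0: "EQ p c lam sel Q0 0 = Q0"
  by (simp add: EQ_def)

lemma EQ_Suc:
  fixes p :: "'q::finite \<Rightarrow> 'q list pmf"
  assumes "\<And>q. finite (set_pmf (p q))"
  shows "EQ p c lam sel Q0 (Suc i) q = EQ p c lam sel Q0 i q
           + pmf sel q * lam i * (Top p c (EQ p c lam sel Q0 i) q - EQ p c lam sel Q0 i q)"
proof -
  let ?M = "qdist p c lam sel Q0 i"
  have "EQ p c lam sel Q0 (Suc i) q
      = measure_pmf.expectation ?M (\<lambda>Q. Q q + pmf sel q * lam i * (Top p c Q q - Q q))"
    unfolding EQ_def qdist.simps
    by (subst expectation_bind_pmf_finite)
      (auto simp: finite_set_pmf_qdist assms expectation_qlearning_step set_bind_pmf intro!: finite_UN_I)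
  then show ?thesis
    using finite_set_pmf_qdist[of p, OF assms]
    by (simp add: EQ_def Top_expectation integrable_measure_pmf_finite algebra_simps)
qed

lemma EQ_Suc_between:
  fixes p :: "'q::finite \<Rightarrow> 'q list pmf"
  assumes "\<And>q. finite (set_pmf (p q))" and "0 \<le> lam i" "lam i \<le> 1"
    and "Top p c (EQ p c lam sel Q0 i) \<le> EQ p c lam sel Q0 i"
  shows "Top p c (EQ p c lam sel Q0 i) \<le> EQ p c lam sel Q0 (Suc i)"
    and "EQ p c lam sel Q0 (Suc i) \<le> EQ p c lam sel Q0 i"
proof -
  have convex_step: "t \<le> e + a * (t - e) \<and> e + a * (t - e) \<le> e"
    if "t \<le> e" "0 \<le> a" "a \<le> 1" for t e a :: real
  proof -
    have "a * (t - e) \<ge> 1 * (t - e)"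
      using that by (intro mult_right_mono_neg) auto
    then show ?thesis
      using that by (simp add: mult_nonneg_nonpos)
  qed
  have "0 \<le> pmf sel q * lam i" "pmf sel q * lam i \<le> 1" for q
    using assms(2,3) pmf_le_1[of sel q] by (auto intro: mult_le_one)
  then show "Top p c (EQ p c lam sel Q0 i) \<le> EQ p c lam sel Q0 (Suc i)"
    and "EQ p c lam sel Q0 (Suc i) \<le> EQ p c lam sel Q0 i"
    using convex_step assms(4) by (auto simp: le_fun_def EQ_Suc[OF assms(1)])
qed

lemma Top_EQ_le_EQ:
  fixes p :: "'q::finite \<Rightarrow> 'q list pmf"
  assumes "\<And>q. finite (set_pmf (p q))" and "\<And>i. 0 \<le> lam i \<and> lam i \<le> 1"
    and "Top p c Q0 \<le> Q0"
  shows "Top p c (EQ p c lam sel Q0 i) \<le> EQ p c lam sel Q0 i"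
proof (induction i)
  case 0
  then show ?case using assms(3) by (simp add: EQ_0)
next
  case (Suc i)
  note between = EQ_Suc_between[OF assms(1) _ _ Suc] assms(2)[of i]
  have "Top p c (EQ p c lam sel Q0 (Suc i)) \<le> Top p c (EQ p c lam sel Q0 i)"
    using between by (intro Top_mono) auto
  also have "\<dots> \<le> EQ p c lam sel Q0 (Suc i)"
    using between by auto
  finally show ?case .
qed

lemma le_EQ:
  fixes p :: "'q::finite \<Rightarrow> 'q list pmf"
  assumes "\<And>q. finite (set_pmf (p q))" and "\<And>i. 0 \<le> lam i \<and> lam i \<le> 1"
    and "Top p c Q0 \<le> Q0" and "x \<le> Top p c x" and "x \<le> Q0"
  shows "x \<le> EQ p c lam sel Q0 i"
proof (induction i)
  case 0
  then show ?case using assms(5) by (simp add: EQ_0)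
next
  case (Suc i)
  have "x \<le> Top p c x" by (fact assms(4))
  also have "\<dots> \<le> Top p c (EQ p c lam sel Q0 i)"
    using Suc by (rule Top_mono)
  also have "\<dots> \<le> EQ p c lam sel Q0 (Suc i)"
    using assms(2)[of i] by (intro EQ_Suc_between(1) assms(1) Top_EQ_le_EQ assms(2,3)) auto
  finally show ?case .
qed

lemma EQ_descent:
  fixes p :: "'q::finite \<Rightarrow> 'q list pmf"
  assumes "\<And>q. finite (set_pmf (p q))" and "\<And>i. 0 \<le> lam i \<and> lam i \<le> 1"
    and "Top p c Q0 \<le> Q0" and "x \<le> Top p c x" and "x \<le> Q0"
  shows "x \<le> Top p c (EQ p c lam sel Q0 i)
    \<and> Top p c (EQ p c lam sel Q0 i) \<le> EQ p c lam sel Q0 (Suc i)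
    \<and> EQ p c lam sel Q0 (Suc i) \<le> EQ p c lam sel Q0 i"
proof -
  have "x \<le> Top p c (EQ p c lam sel Q0 i)"
    using assms(4) Top_mono[OF le_EQ[OF assms]] by (rule order_trans)
  moreover note EQ_Suc_between[OF assms(1) _ _ Top_EQ_le_EQ[OF assms(1-3)]] assms(2)[of i]
  ultimately show ?thesis by auto
qed

theorem lemma1:
  fixes p :: "'q::finite \<Rightarrow> 'q list pmf" and c :: "'q \<Rightarrow> real"
    and lam :: "nat \<Rightarrow> real" and sel :: "'q pmf" and \<kappa> :: real
  assumes "bmc p c"
    and "\<forall>q. cstar p c q < \<infinity>"
    and "\<forall>i. 0 \<le> lam i \<and> lam i \<le> 1"
    and "\<kappa> \<ge> 1"
  shows "\<forall>i. (\<lambda>q. enn2real (cstar p c q))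
              \<le> Top p c (EQ p c lam sel (\<lambda>q. \<kappa> * enn2real (cstar p c q)) i)
           \<and> Top p c (EQ p c lam sel (\<lambda>q. \<kappa> * enn2real (cstar p c q)) i)
              \<le> EQ p c lam sel (\<lambda>q. \<kappa> * enn2real (cstar p c q)) (Suc i)
           \<and> EQ p c lam sel (\<lambda>q. \<kappa> * enn2real (cstar p c q)) (Suc i)
              \<le> EQ p c lam sel (\<lambda>q. \<kappa> * enn2real (cstar p c q)) i"
proof -
  define x where "x q = enn2real (cstar p c q)" for q
  have fin: "\<And>q. finite (set_pmf (p q))" and cpos: "\<And>q. 0 < c q"
    using assms(1) by (auto simp: bmc_def)
  have fix_x: "Top p c x = x"
    unfolding x_def using cpos assms(2) by (intro Top_cstar) (auto intro: less_imp_le)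
  have start_super: "Top p c (\<lambda>q. \<kappa> * x q) \<le> (\<lambda>q. \<kappa> * x q)"
    using cpos assms(4) by (auto simp: le_fun_def Top_scale fix_x algebra_simps)
  have start_above: "x \<le> (\<lambda>q. \<kappa> * x q)"
    using mult_right_mono[OF assms(4) enn2real_nonneg] by (simp add: le_fun_def x_def)
  show ?thesis
    using EQ_descent[OF fin _ start_super fix_x[symmetric, THEN eq_refl] start_above] assms(3)
    unfolding x_def by blast
qed

end
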